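(* For every positive integer $n$ and every $w\in\mathfrak{H}$, $S_\hbar^t\bigl(\rho_{n,t}^{(\hbar)}(w)\bigr)=\rho_{n,0}^{(\hbar)}(w)$.
   Context: Let $\hbar,t$ be formal variables and $\mathfrak{H}=\mathbb{Q}[\hbar,t]\langle x,y\rangle$; $\mathfrak{H}^1=\mathbb{Q}[\hbar,t]+\mathfrak{H}y$, $z_j=x^{j-1}y$. Let $z_i\circ_+ z_j=z_{i+j}+\hbar z_{i+j-1}$ on the $\mathbb{Q}[\hbar,t]$-span of the $z_j$, extended to an action on $\mathfrak{H}^1$ by $z_i\circ_+1=0$, $z_i\circ_+(z_jw)=(z_i\circ_+z_j)w$. Let $S_\hbar^t:\mathfrak{H}^1\to\mathfrak{H}^1$ be the $\mathbb{Q}[\hbar,t]$-linear map with $S_\hbar^t(1)=1$, $S_\hbar^t(z_kw)=z_kS_\hbar^t(w)+t\,z_k\circ_+S_\hbar^t(w)$ for words $w\in\mathfrak{H}^1$. Let $\gamma_\hbar^t$ be the algebra automorphism of $\mathfrak{H}$ with $\gamma_\hbar^t(x)=x$, $\gamma_\hbar^t(y)=tx+y+\hbar t$. For $n\ge1$, make $\mathfrak{H}^{\otimes(n+1)}$ (tensor over $\mathbb{Q}[\hbar,t]$) an $\mathfrak{H}$-bimodule by $a\diamond(w_1\otimes\cdots\otimes w_{n+1})=w_1\otimes\cdots\otimes w_n\otimes aw_{n+1}$ and $(w_1\otimes\cdots\otimes w_{n+1})\diamond b=w_1b\otimes w_2\otimes\cdots\otimes w_{n+1}$. Let $\mathcal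 C_{n,t}^{(\hbar)}:\mathfrak{H}\to\mathfrak{H}^{\otimes(n+1)}$ be the $\mathbb{Q}[\hbar,t]$-linear map with $\mathcal C_{n,t}^{(\hbar)}(x)=-\mathcal C_{n,t}^{(\hbar)}(y)=x\otimes((1-t)x+y-\hbar t)^{\otimes(n-1)}\otimes y$ and $\mathcal C_{n,t}^{(\hbar)}(vw)=\mathcal C_{n,t}^{(\hbar)}(v)\diamond(\gamma_\hbar^t)^{-1}(w)+(\gamma_\hbar^t)^{-1}(v)\diamond\mathcal C_{n,t}^{(\hbar)}(w)$ (so $\mathcal C_{n,t}^{(\hbar)}(1)=0$). Let $M_n:\mathfrak{H}^{\otimes(n+1)}\to\mathfrak{H}$ be multiplication $w_1\otimes\cdots\otimes w_{n+1}\mapsto w_1\cdots w_{n+1}$, and $\rho_{n,t}^{(\hbar)}=M_n\circ\mathcal C_{n,t}^{(\hbar)}$; $\rho_{n,0}^{(\hbar)}$ denotes the same map with $t=0$. The map $\rho_{n,t}^{(\hbar)}$ takes values in $\mathfrak{H}y\subset\mathfrak{H}^1$, so $S_\hbar^t$ can be applied. *)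

theory Defs
  imports "HOL-Computational_Algebra.Polynomial"
begin

section \<open>Coefficient ring Q[hbar,t] = (Q[hbar])[t]\<close>

type_synonym R = "rat poly poly"

definition hb :: R where "hb = [:[:0, 1:]:]"
definition tt :: R where "tt = [:0, 1:]"

section \<open>The free algebra H = R<x,y> as coefficient functions on words\<close>

datatype letter = X | Y

type_synonym word = "letter list"
type_synonym nc = "word \<Rightarrow> R"          (* elements of H (finite support) *)
type_synonym tens = "word list \<Rightarrow> R"    (* elements of H^{\<otimes>k}, k = length of index list *)

definition nc_zero :: nc where "nc_zero = (\<lambda>_. 0)"
definition nc_add :: "nc \<Rightarrow> nc \<Rightarrow> nc" where "nc_add f g = (\<lambda>w. f w + g w)"
definition nc_smult :: "R \<Rightarrow> nc \<Rightarrow> nc" where "nc_smult c f = (\<lambda>w. c * f w)"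
definition mono :: "word \<Rightarrow> nc" where "mono u = (\<lambda>w. if w = u then 1 else 0)"

definition nc_mult :: "nc \<Rightarrow> nc \<Rightarrow> nc" where
  "nc_mult f g = (\<lambda>w. \<Sum>i\<le>length w. f (take i w) * g (drop i w))"

definition nc_supp :: "nc \<Rightarrow> word set" where "nc_supp f = {u. f u \<noteq> 0}"

definition lin :: "(word \<Rightarrow> nc) \<Rightarrow> nc \<Rightarrow> nc" where
  "lin L f = (\<lambda>w. \<Sum>u\<in>nc_supp f. f u * L u w)"

definition xx :: nc where "xx = mono [X]"
definition yy :: nc where "yy = mono [Y]"
definition one :: nc where "one = mono []"

definition zw :: "nat \<Rightarrow> word" where "zw k = replicate (k - 1) X @ [Y]"

text \<open>circ_aux i k w: z_i \<circ>_+ (x^k w); on a word z_j w' this is (z_(i+j) + hbar z_(i+j-1)) w';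
  on the empty word it is 0.\<close>
primrec circ_aux :: "nat \<Rightarrow> nat \<Rightarrow> word \<Rightarrow> nc" where
  "circ_aux i k [] = nc_zero"
| "circ_aux i k (a # w) = (case a of
      X \<Rightarrow> circ_aux i (Suc k) w
    | Y \<Rightarrow> nc_add (mono (zw (i + Suc k) @ w)) (nc_smult hb (mono (zw (i + k) @ w))))"

definition circ :: "nat \<Rightarrow> nc \<Rightarrow> nc" where "circ i f = lin (circ_aux i 0) f"

text \<open>S_aux tau k w = S^tau(x^k w): S(1) = 1, S(z_k w) = z_k S(w) + tau z_k \<circ>_+ S(w)
  (words outside H^1 are sent to 0; they never occur in the statement).\<close>
primrec S_aux :: "R \<Rightarrow> nat \<Rightarrow> word \<Rightarrow> nc" where
  "S_aux \<tau> k [] = (if k = 0 then one else nc_zero)"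
| "S_aux \<tau> k (a # w) = (case a of
      X \<Rightarrow> S_aux \<tau> (Suc k) w
    | Y \<Rightarrow> nc_add (nc_mult (mono (zw (Suc k))) (S_aux \<tau> 0 w))
                  (nc_smult \<tau> (circ (Suc k) (S_aux \<tau> 0 w))))"

definition S_map :: "R \<Rightarrow> nc \<Rightarrow> nc" where "S_map \<tau> f = lin (S_aux \<tau> 0) f"

text \<open>(gamma^tau)^(-1) is the algebra automorphism with x \<mapsto> x, y \<mapsto> y - tau x - hbar tau,
  the inverse of gamma^tau : x \<mapsto> x, y \<mapsto> tau x + y + hbar tau.\<close>
definition gamma_inv_letter :: "R \<Rightarrow> letter \<Rightarrow> nc" where
  "gamma_inv_letter \<tau> a = (case a of X \<Rightarrow> xx
     | Y \<Rightarrow> (\<lambda>w. yy w - \<tau> * xx w - hb * \<tau> * one w))"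

definition gamma_inv_word :: "R \<Rightarrow> word \<Rightarrow> nc" where
  "gamma_inv_word \<tau> w = foldr (\<lambda>a acc. nc_mult (gamma_inv_letter \<tau> a) acc) w one"

definition tens_zero :: tens where "tens_zero = (\<lambda>_. 0)"
definition tens_add :: "tens \<Rightarrow> tens \<Rightarrow> tens" where "tens_add S T = (\<lambda>ws. S ws + T ws)"

definition tens_of :: "nc list \<Rightarrow> tens" where
  "tens_of fs = (\<lambda>ws. if length ws = length fs
                       then (\<Prod>i<length fs. (fs ! i) (ws ! i)) else 0)"

text \<open>a \<diamond> (w_1 \<otimes> ... \<otimes> w_(n+1)) = w_1 \<otimes> ... \<otimes> a w_(n+1)\<close>
definition lmod :: "nc \<Rightarrow> tens \<Rightarrow> tens" where
  "lmod a T = (\<lambda>ws. if ws = [] then 0 else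
      (\<Sum>i\<le>length (last ws). a (take i (last ws)) * T (butlast ws @ [drop i (last ws)])))"

text \<open>(w_1 \<otimes> ... \<otimes> w_(n+1)) \<diamond> b = w_1 b \<otimes> w_2 \<otimes> ... \<otimes> w_(n+1)\<close>
definition rmod :: "tens \<Rightarrow> nc \<Rightarrow> tens" where
  "rmod T b = (\<lambda>ws. case ws of [] \<Rightarrow> 0
      | w1 # rest \<Rightarrow> (\<Sum>i\<le>length w1. T (take i w1 # rest) * b (drop i w1)))"

definition C_gen :: "nat \<Rightarrow> R \<Rightarrow> tens" where
  "C_gen n \<tau> = tens_of ([xx] @ replicate (n - 1)
        (\<lambda>w. (1 - \<tau>) * xx w + yy w - hb * \<tau> * one w) @ [yy])"

definition C_letter :: "nat \<Rightarrow> R \<Rightarrow> letter \<Rightarrow> tens" where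
  "C_letter n \<tau> a = (case a of X \<Rightarrow> C_gen n \<tau> | Y \<Rightarrow> (\<lambda>ws. - C_gen n \<tau> ws))"

primrec C_word :: "nat \<Rightarrow> R \<Rightarrow> word \<Rightarrow> tens" where
  "C_word n \<tau> [] = tens_zero"
| "C_word n \<tau> (a # w) = tens_add (rmod (C_letter n \<tau> a) (gamma_inv_word \<tau> w))
                                   (lmod (gamma_inv_letter \<tau> a) (C_word n \<tau> w))"

definition C_map :: "nat \<Rightarrow> R \<Rightarrow> nc \<Rightarrow> tens" where
  "C_map n \<tau> f = (\<lambda>ws. \<Sum>u\<in>nc_supp f. f u * C_word n \<tau> u ws)"

definition M_map :: "nat \<Rightarrow> tens \<Rightarrow> nc" where
  "M_map n T = (\<lambda>w. \<Sum>ws\<in>{ws. length ws = Suc n \<and> concat ws = w}. T ws)"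

definition rho :: "nat \<Rightarrow> R \<Rightarrow> nc \<Rightarrow> nc" where
  "rho n \<tau> f = M_map n (C_map n \<tau> f)"

end

theory Submission
  imports Defs
begin

text \<open>
  For a word \<open>u = a\<^sub>1\<cdots>a\<^sub>m\<close>, unrolling the twisted Leibniz rule for \<open>C\<^sub>n\<^sub>,\<^sub>\<tau>\<close> gives
  \<open>C\<^sub>n\<^sub>,\<^sub>\<tau>(u) = \<Sum>\<^sub>k \<plusminus> x \<gamma>\<^sup>-\<^sup>1(a\<^sub>k\<^sub>+\<^sub>1\<cdots>a\<^sub>m) \<otimes> m\<^sub>\<tau>\<^sup>\<otimes>\<^sup>(\<^sup>n\<^sup>-\<^sup>1\<^sup>) \<otimes> \<gamma>\<^sup>-\<^sup>1(a\<^sub>1\<cdots>a\<^sub>k\<^sub>-\<^sub>1) y\<close>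
  with \<open>m\<^sub>\<tau> = (1-\<tau>)x + y - \<hbar>\<tau>\<close>, so \<open>\<rho>\<^sub>n\<^sub>,\<^sub>\<tau>(u) = \<Sum>\<^sub>k \<plusminus> F\<^sub>k\<^sup>\<tau> y\<close>.
  On the other side, \<open>S\<^sup>\<tau>(F y) = \<gamma>\<^sup>\<tau>(F) y\<close> for every \<open>F\<close>: the recursion for \<open>S\<^sup>\<tau>\<close>
  replaces every \<open>z\<^sub>k = x\<^sup>k\<^sup>-\<^sup>1y\<close> to the left of the final \<open>y\<close> by \<open>x\<^sup>k\<^sup>-\<^sup>1(y + \<tau>x + \<hbar>\<tau>)\<close>.
  Finally \<open>\<gamma>\<^sup>\<tau>\<close> undoes \<open>(\<gamma>\<^sup>\<tau>)\<^sup>-\<^sup>1\<close> and sends \<open>m\<^sub>\<tau>\<close> to \<open>x + y = m\<^sub>0\<close>, hence \<open>\<gamma>\<^sup>\<tau>(F\<^sub>k\<^sup>\<tau>) = F\<^sub>k\<^sup>0\<close>.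
\<close>

abbreviation nc_fin :: "nc \<Rightarrow> bool" where "nc_fin f \<equiv> finite (nc_supp f)"

lemma lin_eq_sum_superset:
  assumes "finite A" "nc_supp f \<subseteq> A"
  shows "lin L f w = (\<Sum>u\<in>A. f u * L u w)"
  unfolding lin_def using assms
  by (intro sum.mono_neutral_left) (auto simp: nc_supp_def)

lemma nc_fin_sum:
  assumes "finite A" "\<And>a. a \<in> A \<Longrightarrow> nc_fin (h a)"
  shows "nc_fin (\<lambda>v. \<Sum>a\<in>A. c a * h a v)"
proof -
  have "nc_supp (\<lambda>v. \<Sum>a\<in>A. c a * h a v) \<subseteq> (\<Union>a\<in>A. nc_supp (h a))"
  proof
    fix v assume "v \<in> nc_supp (\<lambda>v. \<Sum>a\<in>A. c a * h a v)"
    then have "(\<Sum>a\<in>A. c a * h a v) \<noteq> 0" by (simp add: nc_supp_def)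
    then obtain a where "a \<in> A" "c a * h a v \<noteq> 0" by (meson sum.neutral)
    then show "v \<in> (\<Union>a\<in>A. nc_supp (h a))" by (auto simp: nc_supp_def)
  qed
  then show ?thesis using assms by (meson finite_UN_I finite_subset)
qed

lemma nc_fin_mono [simp]: "nc_fin (mono u)"
  by (simp add: nc_supp_def mono_def)

lemma nc_fin_add: "nc_fin f \<Longrightarrow> nc_fin g \<Longrightarrow> nc_fin (\<lambda>v. f v + g v)"
  by (rule finite_subset[of _ "nc_supp f \<union> nc_supp g"]) (auto simp: nc_supp_def)

lemma nc_fin_diff: "nc_fin f \<Longrightarrow> nc_fin g \<Longrightarrow> nc_fin (\<lambda>v. f v - g v)"
  by (rule finite_subset[of _ "nc_supp f \<union> nc_supp g"]) (auto simp: nc_supp_def)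

lemma nc_fin_smult: "nc_fin f \<Longrightarrow> nc_fin (\<lambda>v. c * f v)"
  by (rule finite_subset[of _ "nc_supp f"]) (auto simp: nc_supp_def)

lemma lin_add:
  assumes "nc_fin f" "nc_fin g"
  shows "lin L (\<lambda>v. f v + g v) = (\<lambda>w. lin L f w + lin L g w)"
proof
  fix w
  let ?A = "nc_supp f \<union> nc_supp g"
  have "lin L (\<lambda>v. f v + g v) w = (\<Sum>u\<in>?A. (f u + g u) * L u w)"
    by (rule lin_eq_sum_superset) (use assms in \<open>auto simp: nc_supp_def\<close>)
  also have "\<dots> = (\<Sum>u\<in>?A. f u * L u w) + (\<Sum>u\<in>?A. g u * L u w)"
    by (simp add: distrib_right sum.distrib)
  also have "\<dots> = lin L f w + lin L g w"
    using assms by (simp add: lin_eq_sum_superset[of ?A f] lin_eq_sum_superset[of ?A g])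
  finally show "lin L (\<lambda>v. f v + g v) w = lin L f w + lin L g w" .
qed

lemma lin_smult:
  assumes "nc_fin f"
  shows "lin L (\<lambda>v. c * f v) = (\<lambda>w. c * lin L f w)"
proof
  fix w
  have "lin L (\<lambda>v. c * f v) w = (\<Sum>u\<in>nc_supp f. (c * f u) * L u w)"
    by (rule lin_eq_sum_superset) (use assms in \<open>auto simp: nc_supp_def\<close>)
  also have "\<dots> = c * lin L f w" by (simp add: lin_def sum_distrib_left mult.assoc)
  finally show "lin L (\<lambda>v. c * f v) w = c * lin L f w" .
qed

lemma lin_diff:
  assumes "nc_fin f" "nc_fin g"
  shows "lin L (\<lambda>v. f v - g v) = (\<lambda>w. lin L f w - lin L g w)"
  using lin_add[OF assms(1) nc_fin_smult[OF assms(2)], of L "-1"] lin_smult[OF assms(2), of L "-1"]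
  by simp

lemma lin_mono [simp]: "lin L (mono u) = L u"
proof -
  have "nc_supp (mono u) = {u}" by (auto simp: nc_supp_def mono_def)
  then show ?thesis by (intro ext) (simp add: lin_def mono_def)
qed

lemma lin_sum:
  assumes "finite A" "\<And>a. a \<in> A \<Longrightarrow> nc_fin (h a)"
  shows "lin L (\<lambda>v. \<Sum>a\<in>A. c a * h a v) = (\<lambda>w. \<Sum>a\<in>A. c a * lin L (h a) w)"
  using assms
proof (induction A rule: finite_induct)
  case empty
  have "nc_supp (\<lambda>v. \<Sum>a\<in>{}. c a * h a v) = {}" by (simp add: nc_supp_def)
  then show ?case by (simp add: lin_def)
next
  case (insert a A)
  have fin_A: "nc_fin (\<lambda>v. \<Sum>a\<in>A. c a * h a v)"
    using insert by (intro nc_fin_sum) auto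
  have "lin L (\<lambda>v. \<Sum>a\<in>insert a A. c a * h a v)
      = lin L (\<lambda>v. c a * h a v + (\<Sum>a\<in>A. c a * h a v))"
    using insert by simp
  also have "\<dots> = (\<lambda>w. c a * lin L (h a) w + lin L (\<lambda>v. \<Sum>a\<in>A. c a * h a v) w)"
    using insert fin_A by (simp add: lin_add nc_fin_smult lin_smult)
  also have "\<dots> = (\<lambda>w. \<Sum>a\<in>insert a A. c a * lin L (h a) w)"
    using insert by simp
  finally show ?case .
qed

lemma lin_lin:
  assumes "nc_fin f" "\<And>u. nc_fin (L' u)"
  shows "lin L (lin L' f) = lin (\<lambda>u. lin L (L' u)) f"
  using lin_sum[OF assms(1), of L' L f] assms(2) by (simp add: lin_def)

lemma lin_cong: "(\<And>u. u \<in> nc_supp f \<Longrightarrow> L u = L' u) \<Longrightarrow> lin L f = lin L' f"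
  unfolding lin_def by (intro ext sum.cong refl) simp

lemma nc_expand: "nc_fin f \<Longrightarrow> f = (\<lambda>v. \<Sum>u\<in>nc_supp f. f u * mono u v)"
proof (rule ext)
  fix v
  assume "nc_fin f"
  have "(\<Sum>u\<in>nc_supp f. f u * mono u v) = (\<Sum>u\<in>nc_supp f. if u = v then f v else 0)"
    by (rule sum.cong) (auto simp: mono_def)
  also have "\<dots> = f v" using \<open>nc_fin f\<close> by (cases "f v = 0") (simp_all add: nc_supp_def)
  finally show "f v = (\<Sum>u\<in>nc_supp f. f u * mono u v)" by simp
qed

lemma nc_mult_Nil [simp]: "nc_mult f g [] = f [] * g []"
  by (simp add: nc_mult_def)

lemma nc_mult_Cons: "nc_mult f g (a # w) = f [] * g (a # w) + nc_mult (\<lambda>u. f (a # u)) g w"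
  unfolding nc_mult_def length_Cons sum.atMost_Suc_shift by simp

lemma nc_mult_lin_left:
  "nc_mult (\<lambda>v. c * f v + f' v) h = (\<lambda>w. c * nc_mult f h w + nc_mult f' h w)"
  unfolding nc_mult_def by (simp add: algebra_simps sum.distrib sum_distrib_left)

lemma nc_mult_lin_right:
  "nc_mult h (\<lambda>v. c * f v + f' v) = (\<lambda>w. c * nc_mult h f w + nc_mult h f' w)"
  unfolding nc_mult_def by (simp add: algebra_simps sum.distrib sum_distrib_left)

lemma nc_mult_add_left: "nc_mult (\<lambda>v. f v + f' v) h = (\<lambda>w. nc_mult f h w + nc_mult f' h w)"
  using nc_mult_lin_left[of 1 f f' h] by simp

lemma nc_mult_add_right: "nc_mult h (\<lambda>v. f v + f' v) = (\<lambda>w. nc_mult h f w + nc_mult h f' w)"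
  using nc_mult_lin_right[of h 1 f f'] by simp

lemma nc_mult_smult_left: "nc_mult (\<lambda>v. c * f v) h = (\<lambda>w. c * nc_mult f h w)"
  using nc_mult_lin_left[of c f "\<lambda>_. 0" h] by (simp add: nc_mult_def)

lemma nc_mult_smult_right: "nc_mult h (\<lambda>v. c * f v) = (\<lambda>w. c * nc_mult h f w)"
  using nc_mult_lin_right[of h c f "\<lambda>_. 0"] by (simp add: nc_mult_def)

lemma nc_mult_diff_left: "nc_mult (\<lambda>v. f v - f' v) h = (\<lambda>w. nc_mult f h w - nc_mult f' h w)"
  using nc_mult_lin_left[of "-1" f' f h] by (simp add: algebra_simps)

lemma nc_mult_diff_right: "nc_mult h (\<lambda>v. f v - f' v) = (\<lambda>w. nc_mult h f w - nc_mult h f' w)"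
  using nc_mult_lin_right[of h "-1" f' f] by (simp add: algebra_simps)

lemmas nc_mult_linear_simps = nc_mult_add_left nc_mult_add_right nc_mult_smult_left
  nc_mult_smult_right nc_mult_diff_left nc_mult_diff_right

lemma nc_mult_sum_left:
  "nc_mult (\<lambda>v. \<Sum>a\<in>A. c a * h a v) g = (\<lambda>w. \<Sum>a\<in>A. c a * nc_mult (h a) g w)"
  unfolding nc_mult_def
  by (simp add: sum_distrib_left sum_distrib_right mult.assoc sum.swap[of _ A])

lemma nc_mult_sum_right:
  "nc_mult g (\<lambda>v. \<Sum>a\<in>A. c a * h a v) = (\<lambda>w. \<Sum>a\<in>A. c a * nc_mult g (h a) w)"
  unfolding nc_mult_def
  by (simp add: sum_distrib_left sum_distrib_right mult.left_commute sum.swap[of _ A])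

lemma nc_mult_assoc: "nc_mult (nc_mult f g) h = nc_mult f (nc_mult g h)"
proof (rule ext)
  fix w show "nc_mult (nc_mult f g) h w = nc_mult f (nc_mult g h) w"
  proof (induction w arbitrary: f)
    case Nil
    then show ?case by (simp add: mult.assoc)
  next
    case (Cons a w)
    have "(\<lambda>u. nc_mult f g (a # u)) = (\<lambda>u. f [] * g (a # u) + nc_mult (\<lambda>u. f (a # u)) g u)"
      by (simp add: nc_mult_Cons)
    then have "nc_mult (nc_mult f g) h (a # w)
       = f [] * g [] * h (a # w) + (f [] * nc_mult (\<lambda>u. g (a # u)) h w
          + nc_mult (nc_mult (\<lambda>u. f (a # u)) g) h w)"
      by (simp add: nc_mult_Cons[of "nc_mult f g"] nc_mult_lin_left)
    also have "\<dots> = nc_mult f (nc_mult g h) (a # w)"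
      by (simp add: Cons.IH nc_mult_Cons[of f] nc_mult_Cons[of g] algebra_simps)
    finally show ?case .
  qed
qed

lemma nc_mult_mono_left:
  "nc_mult (mono u) g = (\<lambda>w. if take (length u) w = u then g (drop (length u) w) else 0)"
proof (rule ext)
  fix w
  have "nc_mult (mono u) g w = (\<Sum>i\<le>length w. if i = length u
           then (if take (length u) w = u then g (drop (length u) w) else 0) else 0)"
    unfolding nc_mult_def mono_def by (rule sum.cong) auto
  then show "nc_mult (mono u) g w = (if take (length u) w = u then g (drop (length u) w) else 0)"
    by (auto dest: arg_cong[of _ _ length])
qed

lemma mono_mult_mono [simp]: "nc_mult (mono u) (mono v) = mono (u @ v)"
proof (rule ext)
  fix w
  have "(u @ v = w) = (u = take (length u) w \<and> v = drop (length u) w)"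
    by (rule append_eq_conv_conj)
  then show "nc_mult (mono u) (mono v) w = mono (u @ v) w"
    unfolding nc_mult_mono_left by (auto simp: mono_def)
qed

lemma one_nc_mult [simp]: "nc_mult one g = g"
  unfolding one_def by (rule ext) (simp add: nc_mult_mono_left)

lemma nc_mult_one [simp]: "nc_mult f one = f"
proof (rule ext)
  fix w
  have "nc_mult f one w = (\<Sum>i\<le>length w. if i = length w then f w else 0)"
    unfolding nc_mult_def one_def mono_def by (rule sum.cong) auto
  then show "nc_mult f one w = f w" by simp
qed

lemma nc_mult_expand:
  assumes "nc_fin f" "nc_fin g"
  shows "nc_mult f g = (\<lambda>w. \<Sum>a\<in>nc_supp f. f a * (\<Sum>b\<in>nc_supp g. g b * mono (a @ b) w))"
  by (subst nc_expand[OF assms(1)], subst nc_expand[OF assms(2)])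
    (simp add: nc_mult_sum_left nc_mult_sum_right)

lemma nc_mult_mono_right:
  assumes "nc_fin f"
  shows "nc_mult f (mono v) = (\<lambda>w. \<Sum>a\<in>nc_supp f. f a * mono (a @ v) w)"
  by (subst nc_expand[OF assms]) (simp add: nc_mult_sum_left)

lemma nc_fin_mult: "nc_fin f \<Longrightarrow> nc_fin g \<Longrightarrow> nc_fin (nc_mult f g)"
  by (simp add: nc_mult_expand nc_fin_sum)

lemma nc_fin_xx [simp]: "nc_fin xx" and nc_fin_yy [simp]: "nc_fin yy" and nc_fin_one [simp]: "nc_fin one"
  by (simp_all add: xx_def yy_def one_def)

section \<open>The automorphism \<open>\<gamma>\<^sup>\<tau>\<close>\<close>

definition gamma_letter :: "R \<Rightarrow> letter \<Rightarrow> nc" where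
  "gamma_letter \<tau> a = (case a of X \<Rightarrow> xx | Y \<Rightarrow> (\<lambda>w. yy w + \<tau> * xx w + (hb * \<tau>) * one w))"

definition gamma_word :: "R \<Rightarrow> word \<Rightarrow> nc" where
  "gamma_word \<tau> u = foldr (\<lambda>a acc. nc_mult (gamma_letter \<tau> a) acc) u one"

definition gamma_map :: "R \<Rightarrow> nc \<Rightarrow> nc" where
  "gamma_map \<tau> f = lin (gamma_word \<tau>) f"

lemma gamma_word_Nil [simp]: "gamma_word \<tau> [] = one"
  by (simp add: gamma_word_def)

lemma gamma_word_Cons [simp]:
  "gamma_word \<tau> (a # u) = nc_mult (gamma_letter \<tau> a) (gamma_word \<tau> u)"
  by (simp add: gamma_word_def)

lemma gamma_word_append: "gamma_word \<tau> (u @ v) = nc_mult (gamma_word \<tau> u) (gamma_word \<tau> v)"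
  by (induction u) (simp_all add: nc_mult_assoc)

lemma gamma_map_mult:
  assumes "nc_fin f" "nc_fin g"
  shows "gamma_map \<tau> (nc_mult f g) = nc_mult (gamma_map \<tau> f) (gamma_map \<tau> g)"
proof -
  have prefix: "lin (gamma_word \<tau>) (\<lambda>w. \<Sum>b\<in>nc_supp g. g b * mono (a @ b) w)
      = nc_mult (gamma_word \<tau> a) (gamma_map \<tau> g)" for a
  proof -
    have "lin (gamma_word \<tau>) (\<lambda>w. \<Sum>b\<in>nc_supp g. g b * mono (a @ b) w)
        = (\<lambda>w. \<Sum>b\<in>nc_supp g. g b * gamma_word \<tau> (a @ b) w)"
      using assms by (simp add: lin_sum)
    then show ?thesis
      by (simp add: gamma_word_append nc_mult_sum_right gamma_map_def lin_def)
  qed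
  have "gamma_map \<tau> (nc_mult f g)
      = (\<lambda>w. \<Sum>a\<in>nc_supp f. f a * nc_mult (gamma_word \<tau> a) (gamma_map \<tau> g) w)"
    unfolding nc_mult_expand[OF assms] gamma_map_def
    using assms by (simp add: lin_sum nc_fin_sum prefix[unfolded gamma_map_def])
  also have "\<dots> = nc_mult (gamma_map \<tau> f) (gamma_map \<tau> g)"
    by (simp add: nc_mult_sum_left gamma_map_def lin_def)
  finally show ?thesis .
qed

lemma gamma_map_xx [simp]: "gamma_map \<tau> xx = xx"
  by (simp add: gamma_map_def xx_def gamma_letter_def)

lemma gamma_map_yy [simp]: "gamma_map \<tau> yy = (\<lambda>w. yy w + \<tau> * xx w + (hb * \<tau>) * one w)"
  by (simp add: gamma_map_def yy_def gamma_letter_def)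

lemma gamma_map_one [simp]: "gamma_map \<tau> one = one"
  by (simp add: gamma_map_def one_def)

section \<open>\<open>S\<^sup>\<tau>\<close> on words ending in \<open>y\<close>\<close>

lemma circ_aux_Y_mem:
  "Y \<in> set u \<Longrightarrow> circ_aux (Suc j) k u
     = (\<lambda>v. hb * mono (replicate (j + k) X @ u) v + mono (replicate (Suc (j + k)) X @ u) v)"
proof (induction u arbitrary: k)
  case Nil
  then show ?case by simp
next
  case (Cons a u)
  show ?case
  proof (cases a)
    case X
    then show ?thesis using Cons by (simp add: replicate_app_Cons_same)
  next
    case Y
    then show ?thesis by (intro ext) (simp add: zw_def nc_add_def nc_smult_def add.commute)
  qed
qed

lemma circ_mult_yy:
  assumes "nc_fin F"
  shows "circ (Suc j) (nc_mult F yy)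
     = nc_mult (\<lambda>v. hb * mono (replicate j X) v + mono (replicate (Suc j) X) v) (nc_mult F yy)"
proof -
  have "circ (Suc j) (nc_mult F yy)
      = (\<lambda>w. \<Sum>a\<in>nc_supp F. F a * circ_aux (Suc j) 0 (a @ [Y]) w)"
    using assms by (simp add: circ_def yy_def nc_mult_mono_right lin_sum)
  also have "\<dots> = (\<lambda>w. \<Sum>a\<in>nc_supp F. F a * (hb * mono (replicate j X @ a @ [Y]) w
                                              + mono (replicate (Suc j) X @ a @ [Y]) w))"
    by (simp add: circ_aux_Y_mem)
  also have "\<dots> = nc_mult (\<lambda>v. hb * mono (replicate j X) v + mono (replicate (Suc j) X) v) (nc_mult F yy)"
    using assms by (simp add: yy_def nc_mult_mono_right nc_mult_sum_right nc_mult_linear_simps)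
  finally show ?thesis .
qed

lemma S_aux_snoc_Y:
  "S_aux \<tau> k (u @ [Y]) = nc_mult (mono (replicate k X)) (nc_mult (gamma_word \<tau> u) yy)"
proof (induction u arbitrary: k)
  case Nil
  have "circ (Suc k) one = nc_zero"
    by (simp add: circ_def one_def)
  then show ?case
    by (intro ext) (simp add: nc_add_def nc_smult_def nc_zero_def zw_def yy_def)
next
  case (Cons a u)
  show ?case
  proof (cases a)
    case X
    then show ?thesis
      using Cons.IH[of "Suc k"]
      by (simp add: nc_mult_assoc[symmetric] gamma_letter_def xx_def replicate_append_same)
  next
    case Y
    define Q where "Q = nc_mult (gamma_word \<tau> u) yy"
    have "nc_fin (gamma_word \<tau> u)"
      by (induction u) (simp_all add: nc_fin_mult gamma_letter_def nc_fin_add nc_fin_smult split: letter.split)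
    then have circ_Q: "circ (Suc k) Q
        = nc_mult (\<lambda>v. hb * mono (replicate k X) v + mono (replicate (Suc k) X) v) Q"
      unfolding Q_def by (rule circ_mult_yy)
    have "S_aux \<tau> k ((a # u) @ [Y])
        = (\<lambda>w. nc_mult (mono (replicate k X @ [Y])) Q w
             + \<tau> * nc_mult (\<lambda>v. hb * mono (replicate k X) v + mono (replicate (Suc k) X) v) Q w)"
      using Y Cons.IH[of 0] by (simp add: Q_def[symmetric] one_def[symmetric] circ_Q nc_add_def nc_smult_def zw_def)
    also have "\<dots> = nc_mult (nc_mult (mono (replicate k X)) (gamma_letter \<tau> Y)) Q"
      by (intro ext) (simp add: gamma_letter_def xx_def yy_def one_def nc_mult_linear_simps
          replicate_append_same algebra_simps)
    finally show ?thesis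
      using Y by (simp add: Q_def nc_mult_assoc)
  qed
qed

lemma S_map_mult_yy:
  assumes "nc_fin F"
  shows "S_map \<tau> (nc_mult F yy) = nc_mult (gamma_map \<tau> F) yy"
proof -
  have "S_map \<tau> (nc_mult F yy) = (\<lambda>w. \<Sum>a\<in>nc_supp F. F a * S_aux \<tau> 0 (a @ [Y]) w)"
    using assms by (simp add: S_map_def yy_def nc_mult_mono_right lin_sum)
  also have "\<dots> = nc_mult (gamma_map \<tau> F) yy"
    by (simp add: S_aux_snoc_Y one_def[symmetric] gamma_map_def lin_def nc_mult_sum_left)
  finally show ?thesis .
qed

primrec nc_prod_list :: "nc list \<Rightarrow> nc" where
  "nc_prod_list [] = one"
| "nc_prod_list (f # fs) = nc_mult f (nc_prod_list fs)"

lemma nc_prod_list_append: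
  "nc_prod_list (fs @ gs) = nc_mult (nc_prod_list fs) (nc_prod_list gs)"
  by (induction fs) (simp_all add: nc_mult_assoc)

lemma tens_of_Nil: "tens_of [] ws = (if ws = [] then 1 else 0)"
  unfolding tens_of_def by simp

lemma tens_of_Cons_Nil: "tens_of (f # fs) [] = 0"
  unfolding tens_of_def by simp

lemma tens_of_Cons_Cons: "tens_of (f # fs) (v # vs) = f v * tens_of fs vs"
  unfolding tens_of_def length_Cons prod.lessThan_Suc_shift by simp

lemma tens_of_snoc_Nil: "tens_of (fs @ [f]) [] = 0"
  unfolding tens_of_def by simp

lemma tens_of_snoc_snoc: "tens_of (fs @ [f]) (ws @ [v]) = tens_of fs ws * f v"
proof (induction fs arbitrary: ws)
  case Nil
  then show ?case by (cases ws) (simp_all add: tens_of_Cons_Cons tens_of_Nil tens_of_Cons_Nil)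
next
  case (Cons g fs)
  then show ?case
    by (cases ws) (simp_all add: tens_of_Cons_Cons tens_of_Cons_Nil tens_of_snoc_Nil)
qed

lemma rmod_tens_of: "rmod (tens_of (f # fs)) b = tens_of (nc_mult f b # fs)"
proof (rule ext)
  fix ws show "rmod (tens_of (f # fs)) b ws = tens_of (nc_mult f b # fs) ws"
    by (cases ws) (simp_all add: rmod_def tens_of_Cons_Nil tens_of_Cons_Cons nc_mult_def
        sum_distrib_right sum_distrib_left algebra_simps)
qed

lemma lmod_tens_of: "lmod a (tens_of (fs @ [f])) = tens_of (fs @ [nc_mult a f])"
proof (rule ext)
  fix ws show "lmod a (tens_of (fs @ [f])) ws = tens_of (fs @ [nc_mult a f]) ws"
    by (cases ws rule: rev_cases) (simp_all add: lmod_def tens_of_snoc_Nil tens_of_snoc_snoc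
        nc_mult_def sum_distrib_left sum_distrib_right algebra_simps)
qed

lemma rmod_smult: "rmod (\<lambda>ws. c * T ws) b = (\<lambda>ws. c * rmod T b ws)"
  by (rule ext) (simp add: rmod_def sum_distrib_left mult.assoc split: list.split)

lemma lmod_sum: "lmod a (\<lambda>ws. \<Sum>k\<in>K. c k * T k ws) = (\<lambda>ws. \<Sum>k\<in>K. c k * lmod a (T k) ws)"
  by (rule ext) (simp add: lmod_def sum_distrib_left mult.left_commute sum.swap[of _ K])

lemma M_map_sum: "M_map n (\<lambda>ws. \<Sum>k\<in>K. c k * T k ws) = (\<lambda>w. \<Sum>k\<in>K. c k * M_map n (T k) w)"
  by (rule ext) (simp add: M_map_def sum_distrib_left sum.swap[of _ K])

lemma factorizations_Suc_eq_image:
  "{ws. length ws = Suc m \<and> concat ws = w}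
   = (\<lambda>(i, r). take i w # r) ` (SIGMA i:{..length w}. {r. length r = m \<and> concat r = drop i w})"
proof (rule set_eqI, rule iffI)
  fix ws assume "ws \<in> {ws. length ws = Suc m \<and> concat ws = w}"
  then obtain v r where ws: "ws = v # r" "length r = m" "v @ concat r = w"
    by (cases ws) auto
  then have "v = take (length v) w" "concat r = drop (length v) w" "length v \<le> length w" by auto
  then show "ws \<in> (\<lambda>(i, r). take i w # r) ` (SIGMA i:{..length w}. {r. length r = m \<and> concat r = drop i w})"
    using ws by (intro image_eqI[of _ _ "(length v, r)"]) auto
qed auto

lemma inj_on_factorizations_Suc:
  "inj_on (\<lambda>(i, r). take i w # r) (SIGMA i:{..length w}. {r. length r = m \<and> concat r = drop i w})"
  by (rule inj_onI) (auto dest: arg_cong[of _ _ length])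

lemma finite_factorizations: "finite {ws. length ws = m \<and> concat ws = w}"
proof (induction m arbitrary: w)
  case 0
  have "{ws. length ws = 0 \<and> concat ws = w} \<subseteq> {[]}" by auto
  then show ?case using finite_subset by blast
next
  case (Suc m)
  show ?case unfolding factorizations_Suc_eq_image using Suc.IH by auto
qed

lemma sum_factorizations_tens_of:
  "(\<Sum>ws\<in>{ws. length ws = length fs \<and> concat ws = w}. tens_of fs ws) = nc_prod_list fs w"
proof (induction fs arbitrary: w)
  case Nil
  have "{ws. length ws = 0 \<and> concat ws = w} = (if w = [] then {[]} else {})"
    by auto
  then show ?case by (simp add: tens_of_Nil one_def mono_def)
next
  case (Cons f fs)
  let ?S = "SIGMA i:{..length w}. {r. length r = length fs \<and> concat r = drop i w}"
  have "(\<Sum>ws\<in>{ws. length ws = length (f # fs) \<and> concat ws = w}. tens_of (f # fs) ws)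
      = (\<Sum>p\<in>?S. tens_of (f # fs) ((\<lambda>(i, r). take i w # r) p))"
    unfolding length_Cons factorizations_Suc_eq_image
    by (rule sum.reindex[OF inj_on_factorizations_Suc, unfolded comp_def])
  also have "\<dots> = (\<Sum>i\<le>length w. \<Sum>r\<in>{r. length r = length fs \<and> concat r = drop i w}.
                       f (take i w) * tens_of fs r)"
    by (subst sum.Sigma) (auto simp: finite_factorizations tens_of_Cons_Cons split_def)
  also have "\<dots> = (\<Sum>i\<le>length w. f (take i w) * nc_prod_list fs (drop i w))"
    by (simp add: sum_distrib_left[symmetric] Cons.IH)
  also have "\<dots> = nc_prod_list (f # fs) w" by (simp add: nc_mult_def)
  finally show ?case .
qed

lemma M_map_tens_of: "length fs = Suc n \<Longrightarrow> M_map n (tens_of fs) = nc_prod_list fs"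
  unfolding M_map_def using sum_factorizations_tens_of[of fs] by simp

section \<open>Closed form of \<open>\<rho>\<^sub>n\<^sub>,\<^sub>\<tau>\<close> on words\<close>

definition letter_sign :: "letter \<Rightarrow> R" where
  "letter_sign a = (case a of X \<Rightarrow> 1 | Y \<Rightarrow> -1)"

definition C_mid :: "R \<Rightarrow> nc" where
  "C_mid \<tau> = (\<lambda>w. (1 - \<tau>) * xx w + yy w - hb * \<tau> * one w)"

definition C_summand :: "nat \<Rightarrow> R \<Rightarrow> word \<Rightarrow> nat \<Rightarrow> tens" where
  "C_summand n \<tau> u k = tens_of ([nc_mult xx (gamma_inv_word \<tau> (drop (Suc k) u))]
      @ replicate (n - 1) (C_mid \<tau>) @ [nc_mult (gamma_inv_word \<tau> (take k u)) yy])"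

lemma gamma_inv_word_Nil [simp]: "gamma_inv_word \<tau> [] = one"
  by (simp add: gamma_inv_word_def)

lemma gamma_inv_word_Cons [simp]:
  "gamma_inv_word \<tau> (a # u) = nc_mult (gamma_inv_letter \<tau> a) (gamma_inv_word \<tau> u)"
  by (simp add: gamma_inv_word_def)

lemma C_word_eq_sum:
  "C_word n \<tau> u = (\<lambda>ws. \<Sum>k<length u. letter_sign (u ! k) * C_summand n \<tau> u k ws)"
proof (induction u)
  case Nil
  then show ?case by (simp add: tens_zero_def)
next
  case (Cons a u)
  have C_letter: "C_letter n \<tau> a
      = (\<lambda>ws. letter_sign a * tens_of (xx # (replicate (n - 1) (C_mid \<tau>) @ [yy])) ws)"
    by (cases a) (simp_all add: C_letter_def letter_sign_def C_gen_def C_mid_def)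
  have first: "rmod (C_letter n \<tau> a) (gamma_inv_word \<tau> u)
      = (\<lambda>ws. letter_sign a * C_summand n \<tau> (a # u) 0 ws)"
    unfolding C_letter rmod_smult rmod_tens_of by (simp add: C_summand_def)
  have later: "lmod (gamma_inv_letter \<tau> a) (C_summand n \<tau> u k) = C_summand n \<tau> (a # u) (Suc k)" for k
    using lmod_tens_of[of "gamma_inv_letter \<tau> a" "[nc_mult xx (gamma_inv_word \<tau> (drop (Suc k) u))]
      @ replicate (n - 1) (C_mid \<tau>)"]
    by (simp add: C_summand_def nc_mult_assoc)
  have "C_word n \<tau> (a # u) = (\<lambda>ws. letter_sign a * C_summand n \<tau> (a # u) 0 ws
      + (\<Sum>k<length u. letter_sign (u ! k) * C_summand n \<tau> (a # u) (Suc k) ws))"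
    by (simp only: C_word.simps Cons.IH tens_add_def first lmod_sum later)
  then show ?case
    by (simp add: sum.lessThan_Suc_shift del: sum.lessThan_Suc)
qed

definition rho_summand :: "nat \<Rightarrow> R \<Rightarrow> word \<Rightarrow> nat \<Rightarrow> nc" where
  "rho_summand n \<tau> u k = nc_mult xx (nc_mult (gamma_inv_word \<tau> (drop (Suc k) u))
      (nc_mult (nc_prod_list (replicate (n - 1) (C_mid \<tau>))) (gamma_inv_word \<tau> (take k u))))"

definition rho_word :: "nat \<Rightarrow> R \<Rightarrow> word \<Rightarrow> nc" where
  "rho_word n \<tau> u = M_map n (C_word n \<tau> u)"

lemma rho_eq_lin: "rho n \<tau> f = lin (rho_word n \<tau>) f"
  by (rule ext) (simp add: rho_def M_map_def C_map_def lin_def rho_word_def sum_distrib_left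
      sum.swap[of _ "nc_supp f"])

lemma rho_word_eq_sum:
  assumes "n \<ge> 1"
  shows "rho_word n \<tau> u
    = (\<lambda>w. \<Sum>k<length u. letter_sign (u ! k) * nc_mult (rho_summand n \<tau> u k) yy w)"
proof -
  have "M_map n (C_summand n \<tau> u k) = nc_mult (rho_summand n \<tau> u k) yy" for k
    using assms unfolding C_summand_def
    by (subst M_map_tens_of) (simp_all add: nc_prod_list_append rho_summand_def nc_mult_assoc)
  then show ?thesis
    unfolding rho_word_def C_word_eq_sum M_map_sum by simp
qed

lemma nc_fin_gamma_inv_letter: "nc_fin (gamma_inv_letter \<tau> a)"
  by (simp add: gamma_inv_letter_def nc_fin_diff nc_fin_smult split: letter.split)

lemma nc_fin_gamma_inv_word: "nc_fin (gamma_inv_word \<tau> u)"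
  by (induction u) (simp_all add: nc_fin_mult nc_fin_gamma_inv_letter)

lemma nc_fin_C_mid: "nc_fin (C_mid \<tau>)"
  unfolding C_mid_def by (intro nc_fin_diff nc_fin_add nc_fin_smult nc_fin_xx nc_fin_yy nc_fin_one)

lemma nc_fin_prod_list_C_mid: "nc_fin (nc_prod_list (replicate m (C_mid \<tau>)))"
  by (induction m) (simp_all add: nc_fin_mult nc_fin_C_mid)

lemma nc_fin_rho_summand: "nc_fin (rho_summand n \<tau> u k)"
  unfolding rho_summand_def
  by (simp add: nc_fin_mult nc_fin_gamma_inv_word nc_fin_prod_list_C_mid)

lemma gamma_map_gamma_inv_letter: "gamma_map \<tau> (gamma_inv_letter \<tau> a) = gamma_inv_letter 0 a"
  by (cases a) (simp_all add: gamma_inv_letter_def gamma_map_def lin_diff lin_smult nc_fin_diff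
      nc_fin_smult, simp_all add: gamma_map_def[symmetric] algebra_simps)

lemma gamma_map_gamma_inv_word: "gamma_map \<tau> (gamma_inv_word \<tau> u) = gamma_inv_word 0 u"
  by (induction u) (simp_all add: gamma_map_mult nc_fin_gamma_inv_letter nc_fin_gamma_inv_word
      gamma_map_gamma_inv_letter)

lemma gamma_map_C_mid: "gamma_map \<tau> (C_mid \<tau>) = C_mid 0"
  unfolding C_mid_def gamma_map_def
  by (simp add: lin_diff lin_add lin_smult nc_fin_diff nc_fin_add nc_fin_smult,
      simp add: gamma_map_def[symmetric] algebra_simps)

lemma gamma_map_rho_summand: "gamma_map \<tau> (rho_summand n \<tau> u k) = rho_summand n 0 u k"
proof -
  have "gamma_map \<tau> (nc_prod_list (replicate m (C_mid \<tau>))) = nc_prod_list (replicate m (C_mid 0))"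
    for m
    by (induction m) (simp_all add: gamma_map_mult nc_fin_C_mid nc_fin_prod_list_C_mid gamma_map_C_mid)
  then show ?thesis
    unfolding rho_summand_def
    by (simp add: gamma_map_mult nc_fin_mult nc_fin_gamma_inv_word nc_fin_prod_list_C_mid
        gamma_map_gamma_inv_word)
qed

lemma S_map_rho_word:
  assumes "n \<ge> 1"
  shows "S_map \<tau> (rho_word n \<tau> u) = rho_word n 0 u"
  using assms
  by (simp add: rho_word_eq_sum S_map_def lin_sum nc_fin_mult nc_fin_rho_summand,
      simp add: S_map_def[symmetric] S_map_mult_yy nc_fin_rho_summand gamma_map_rho_summand)

lemma S_map_rho:
  assumes "n \<ge> 1" and "nc_fin w"
  shows "S_map \<tau> (rho n \<tau> w) = rho n 0 w"
proof -
  have "nc_fin (rho_word n \<tau> u)" for u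
    using assms(1) by (simp add: rho_word_eq_sum nc_fin_sum nc_fin_mult nc_fin_rho_summand)
  then have "S_map \<tau> (rho n \<tau> w) = lin (\<lambda>u. S_map \<tau> (rho_word n \<tau> u)) w"
    unfolding rho_eq_lin S_map_def using assms(2) by (rule lin_lin[rotated])
  also have "\<dots> = rho n 0 w"
    unfolding rho_eq_lin by (rule lin_cong) (rule S_map_rho_word[OF assms(1)])
  finally show ?thesis .
qed

theorem lemma3p1:
  fixes n :: nat and w :: nc
  assumes "n \<ge> 1" and "finite (nc_supp w)"
  shows "S_map tt (rho n tt w) = rho n 0 w"
  using assms by (rule S_map_rho)

end
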